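(* Let $(F_n)$ be the Fibonacci numbers ($F_0=0$, $F_1=1$, $F_{n+2}=F_{n+1}+F_n$), $(E_n)$ the sequence with $E_0=0$, $E_1=E_2=1$, $E_{n+3}=E_n+E_{n+2}$, and $(D_n)$ the sequence with $D_0=1$, $D_1=D_2=0$, $D_{n+3}=D_n+D_{n+1}$. Then $$D_n<E_{n-1}\ \text{ for all integers } n\ge 4,\qquad E_n<F_{n-1}\ \text{ for all integers } n\ge 6.$$ *)

theory Defs
  imports "HOL-Number_Theory.Fib"
begin

fun E :: "nat \<Rightarrow> nat" where
  "E 0 = 0"
| "E (Suc 0) = 1"
| "E (Suc (Suc 0)) = 1"
| "E (Suc (Suc (Suc n))) = E n + E (Suc (Suc n))"

fun D :: "nat \<Rightarrow> nat" where
  "D 0 = 1"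
| "D (Suc 0) = 0"
| "D (Suc (Suc 0)) = 0"
| "D (Suc (Suc (Suc n))) = D n + D (Suc n)"

end

theory Submission
  imports Defs
begin

text \<open>Both inequalities follow by induction along the recurrences:
  \<open>D (n+3) = D n + D (n+1) < E (n-1) + E n \<le> E (n-1) + E (n+1) = E (n+2)\<close> and
  \<open>E (n+3) = E n + E (n+2) < F (n-1) + F (n+1) \<le> F n + F (n+1) = F (n+2)\<close>,
  using only monotonicity of the larger sequence.\<close>

lemma E_Suc_mono: "E n \<le> E (Suc n)"
  by (induction n rule: E.induct) simp_all

lemma D_less_E_shifted: "D (n + 4) < E (n + 3)"
proof (induction n rule: D.induct)
  case (4 n)
  have "E (n + 4) \<le> E (n + 5)"
    using E_Suc_mono[of "n + 4"] by (simp add: add.commute)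
  with "4.IH" show ?case
    by (simp add: numeral_eq_Suc)
qed (simp_all add: numeral_eq_Suc)

lemma E_less_fib_shifted: "E (n + 6) < fib (n + 5)"
proof (induction n rule: E.induct)
  case (4 n)
  have "fib (n + 5) \<le> fib (n + 6)"
    using fib_Suc_mono[of "n + 5"] by (simp add: add.commute)
  with "4.IH" show ?case
    by (simp add: numeral_eq_Suc)
qed (simp_all add: numeral_eq_Suc)

theorem theorem12:
  shows "(\<forall>n::nat. n \<ge> 4 \<longrightarrow> D n < E (n - 1)) \<and>
         (\<forall>n::nat. n \<ge> 6 \<longrightarrow> E n < fib (n - 1))"
proof (intro conjI allI impI)
  fix n :: nat
  assume "n \<ge> 4"
  then show "D n < E (n - 1)"
    using D_less_E_shifted[of "n - 4"] by (simp add: Suc_diff_le)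
next
  fix n :: nat
  assume "n \<ge> 6"
  then show "E n < fib (n - 1)"
    using E_less_fib_shifted[of "n - 6"] by (simp add: Suc_diff_le)
qed

end
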